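(* Let $R$ be a DT ring. Then: (1) $er-re\in\Delta(R)$ for every idempotent $e\in R$ and every $r\in R$; (2) $fd+df\in\Delta(R)$ and $fd-df\in\Delta(R)$ for every $f\in\mathrm{Tr}(R)$ and every $d\in\Delta(R)$.
   Context: All rings are associative with identity; $U(R)$ is the group of units. $\Delta(R)=\{x\in R: x+u\in U(R)\text{ for all }u\in U(R)\}$. $\mathrm{Tr}(R)=\{x\in R: x^3=x\}$. A ring $R$ is a DT ring if every $r\in R$ can be written $r=e+d$ with $e\in\mathrm{Tr}(R)$ and $d\in\Delta(R)$. *)

theory Defs
  imports Main
begin

definition units_of_ring :: "'a::ring_1 set" where
  "units_of_ring = {u. \<exists>v. u * v = 1 \<and> v * u = 1}"

definition Delta :: "'a::ring_1 set" where
  "Delta = {x. \<forall>u \<in> units_of_ring. x + u \<in> units_of_ring}"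

definition Tr :: "'a::ring_1 set" where
  "Tr = {x. x ^ 3 = x}"

definition DT_ring :: "'a::ring_1 itself \<Rightarrow> bool" where
  "DT_ring _ = (\<forall>r::'a. \<exists>e d. r = e + d \<and> e \<in> Tr \<and> d \<in> Delta)"

end

theory Submission
  imports Defs
begin

text \<open>
  Every element of \<open>\<Delta>(R)\<close> absorbs multiplication by \<open>u - 1\<close> for units \<open>u\<close>, since
  \<open>\<Delta>(R)\<close> is an additive group stable under multiplication by units. In a DT ring
  every square-zero element \<open>a = f + d\<close> lies in \<open>\<Delta>(R)\<close>: \<open>f\<^sup>2\<close> is an idempotent
  congruent to \<open>a\<^sup>2 = 0\<close> modulo \<open>\<Delta>(R)\<close>, and \<open>\<Delta>(R)\<close> contains no nonzero idempotent.
  For an idempotent \<open>e\<close>, \<open>er - re = er(1 - e) - (1 - e)re\<close> is a difference of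
  square-zero elements. For a tripotent \<open>f\<close> with \<open>g = f\<^sup>2\<close>, the element
  \<open>w = 1 - g + f\<close> is an involution and \<open>f = (w - 1) + g\<close>, which reduces part (2)
  to the idempotent \<open>g\<close>, using also the unit \<open>1 - 2g\<close> to get \<open>2gd \<in> \<Delta>(R)\<close>.
\<close>

lemma one_in_units_of_ring: "(1::'a::ring_1) \<in> units_of_ring"
  by (auto simp: units_of_ring_def)

lemma units_of_ring_if_square_one: "(w::'a::ring_1) * w = 1 \<Longrightarrow> w \<in> units_of_ring"
  by (auto simp: units_of_ring_def)

lemma units_of_ring_mult:
  assumes "(u::'a::ring_1) \<in> units_of_ring" and "v \<in> units_of_ring"
  shows "u * v \<in> units_of_ring"
proof -
  from assms obtain u' v' where "u * u' = 1" "u' * u = 1" "v * v' = 1" "v' * v = 1"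
    by (auto simp: units_of_ring_def)
  moreover have "(u * v) * (v' * u') = u * ((v * v') * u')"
    "(v' * u') * (u * v) = v' * ((u' * u) * v)"
    by (simp_all only: mult.assoc)
  ultimately have "(u * v) * (v' * u') = 1" "(v' * u') * (u * v) = 1" by simp_all
  then show ?thesis by (auto simp: units_of_ring_def)
qed

lemma units_of_ring_uminus: "(u::'a::ring_1) \<in> units_of_ring \<Longrightarrow> - u \<in> units_of_ring"
  unfolding units_of_ring_def by (auto intro: exI[of _ "- _"])

lemma units_of_ring_inverse:
  "(u::'a::ring_1) \<in> units_of_ring \<Longrightarrow> \<exists>v \<in> units_of_ring. u * v = 1 \<and> v * u = 1"
  by (auto simp: units_of_ring_def)

lemma Delta_add: "(x::'a::ring_1) \<in> Delta \<Longrightarrow> y \<in> Delta \<Longrightarrow> x + y \<in> Delta"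
  unfolding Delta_def by (simp add: add.assoc)

lemma Delta_uminus:
  assumes "(x::'a::ring_1) \<in> Delta"
  shows "- x \<in> Delta"
proof -
  { fix u :: 'a assume "u \<in> units_of_ring"
  then have "x + - u \<in> units_of_ring"
    using assms units_of_ring_uminus unfolding Delta_def by blast
  from units_of_ring_uminus[OF this] have "- x + u \<in> units_of_ring" by simp }
  then show ?thesis by (simp add: Delta_def)
qed

lemma Delta_diff: "(x::'a::ring_1) \<in> Delta \<Longrightarrow> y \<in> Delta \<Longrightarrow> x - y \<in> Delta"
  using Delta_add[OF _ Delta_uminus] by (simp only: diff_conv_add_uminus)

lemma Delta_mult_unit_left:
  assumes u: "(u::'a::ring_1) \<in> units_of_ring" and x: "x \<in> Delta"
  shows "u * x \<in> Delta"
  unfolding Delta_def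
proof (intro CollectI ballI)
  fix v :: 'a assume v: "v \<in> units_of_ring"
  obtain u' where u': "u' \<in> units_of_ring" "u * u' = 1"
    using units_of_ring_inverse[OF u] by blast
  have "x + u' * v \<in> units_of_ring"
    using x units_of_ring_mult[OF u'(1) v] by (auto simp: Delta_def)
  then have "u * (x + u' * v) \<in> units_of_ring" by (rule units_of_ring_mult[OF u])
  also have "u * (x + u' * v) = u * x + v"
    using u' by (simp add: distrib_left flip: mult.assoc)
  finally show "u * x + v \<in> units_of_ring" .
qed

lemma Delta_mult_unit_right:
  assumes u: "(u::'a::ring_1) \<in> units_of_ring" and x: "x \<in> Delta"
  shows "x * u \<in> Delta"
  unfolding Delta_def
proof (intro CollectI ballI)
  fix v :: 'a assume v: "v \<in> units_of_ring"
  obtain u' where u': "u' \<in> units_of_ring" "u' * u = 1"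
    using units_of_ring_inverse[OF u] by blast
  have "x + v * u' \<in> units_of_ring"
    using x units_of_ring_mult[OF v u'(1)] by (auto simp: Delta_def)
  then have "(x + v * u') * u \<in> units_of_ring" by (rule units_of_ring_mult[OF _ u])
  also have "(x + v * u') * u = x * u + v"
    using u' by (simp add: distrib_right mult.assoc)
  finally show "x * u + v \<in> units_of_ring" .
qed

lemma Delta_mult_unit_minus_one:
  assumes "(u::'a::ring_1) \<in> units_of_ring" and "d \<in> Delta"
  shows "(u - 1) * d \<in> Delta" and "d * (u - 1) \<in> Delta"
  using Delta_diff[OF Delta_mult_unit_left[OF assms] assms(2)]
    Delta_diff[OF Delta_mult_unit_right[OF assms] assms(2)]
  by (simp_all add: algebra_simps)

lemma one_plus_Delta_in_units_of_ring: "(d::'a::ring_1) \<in> Delta \<Longrightarrow> 1 + d \<in> units_of_ring"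
  using one_in_units_of_ring by (auto simp: Delta_def add.commute)

lemma Delta_mult_self: "(d::'a::ring_1) \<in> Delta \<Longrightarrow> d * d \<in> Delta"
  using Delta_mult_unit_minus_one(1)[OF one_plus_Delta_in_units_of_ring] by fastforce

lemma Delta_mult_square_zero:
  assumes a: "(a::'a::ring_1) * a = 0" and d: "d \<in> Delta"
  shows "a * d \<in> Delta" and "d * a \<in> Delta"
proof -
  have "(1 + a) * (1 - a) = 1" by (simp add: algebra_simps a)
  moreover have "(1 - a) * (1 + a) = 1" by (simp add: algebra_simps a)
  ultimately have "1 + a \<in> units_of_ring" by (auto simp: units_of_ring_def)
  from Delta_mult_unit_minus_one[OF this d]
  show "a * d \<in> Delta" and "d * a \<in> Delta" by simp_all
qed

lemma idempotent_in_Delta_eq_0: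
  assumes gg: "(g::'a::ring_1) * g = g" and g: "g \<in> Delta"
  shows "g = 0"
proof -
  have "g + - 1 \<in> units_of_ring"
    using g units_of_ring_uminus[OF one_in_units_of_ring] unfolding Delta_def by blast
  then obtain v where v: "v * (g - 1) = 1" by (auto simp: units_of_ring_def)
  have "(g - 1) * g = 0" using gg by (simp add: algebra_simps)
  then have "(v * (g - 1)) * g = 0" by (simp add: mult.assoc)
  then show ?thesis using v by simp
qed

lemma Tr_cube: "(f::'a::ring_1) \<in> Tr \<Longrightarrow> f * (f * f) = f"
  by (simp add: Tr_def power3_eq_cube mult.assoc)

lemma DT_ring_square_zero_in_Delta:
  assumes DT: "DT_ring TYPE('a::ring_1)" and a: "(a::'a) * a = 0"
  shows "a \<in> Delta"
proof -
  obtain f d where a_eq: "a = f + d" and f: "f \<in> Tr" and d: "d \<in> Delta"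
    using DT unfolding DT_ring_def by blast
  have f3: "f * (f * f) = f" using Tr_cube[OF f] .
  have "f * f = a * a - a * d - d * a + d * d"
    unfolding a_eq by (simp add: algebra_simps)
  also have "\<dots> = d * d - a * d - d * a" using a by simp
  also have "\<dots> \<in> Delta"
    using Delta_mult_self[OF d] Delta_mult_square_zero[OF a d] by (intro Delta_diff)
  finally have "f * f \<in> Delta" .
  moreover have "(f * f) * (f * f) = f * f" using f3 by (simp add: mult.assoc)
  ultimately have "f * f = 0" using idempotent_in_Delta_eq_0 by blast
  then have "f = 0" using f3 by simp
  then show ?thesis using a_eq d by simp
qed

lemma DT_ring_commutator_idempotent_in_Delta:
  assumes DT: "DT_ring TYPE('a::ring_1)" and e: "(e::'a) * e = e"
  shows "e * r - r * e \<in> Delta"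
proof -
  have ortho: "e * (1 - e) = 0" "(1 - e) * e = 0" using e by (simp_all add: algebra_simps)
  have "(e * r * (1 - e)) * (e * r * (1 - e)) = e * r * ((1 - e) * e) * r * (1 - e)"
    "((1 - e) * r * e) * ((1 - e) * r * e) = (1 - e) * r * (e * (1 - e)) * r * e"
    by (simp_all add: mult.assoc)
  then have "e * r * (1 - e) \<in> Delta" "(1 - e) * r * e \<in> Delta"
    using ortho DT_ring_square_zero_in_Delta[OF DT] by simp_all
  moreover have "e * r - r * e = e * r * (1 - e) - (1 - e) * r * e"
    using e by (simp add: algebra_simps)
  ultimately show ?thesis using Delta_diff by simp
qed

lemma DT_ring_anticommutator_idempotent_in_Delta:
  assumes DT: "DT_ring TYPE('a::ring_1)" and g: "(g::'a) * g = g" and d: "d \<in> Delta"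
  shows "g * d + d * g \<in> Delta"
proof -
  have "(1 - (g + g)) * (1 - (g + g)) = 1" using g by (simp add: algebra_simps)
  then have "(1 - (g + g) - 1) * d \<in> Delta"
    using Delta_mult_unit_minus_one(1)[OF units_of_ring_if_square_one d] by blast
  from Delta_diff[OF Delta_uminus[OF this] DT_ring_commutator_idempotent_in_Delta[OF DT g]]
  have "- ((1 - (g + g) - 1) * d) - (g * d - d * g) \<in> Delta" .
  then show ?thesis by (simp add: algebra_simps)
qed

theorem lemma2p6:
  assumes "DT_ring TYPE('a::ring_1)"
  shows "(\<forall>e r :: 'a. e * e = e \<longrightarrow> e * r - r * e \<in> Delta)
       \<and> (\<forall>f d :: 'a. f \<in> Tr \<and> d \<in> Delta \<longrightarrow>
             f * d + d * f \<in> Delta \<and> f * d - d * f \<in> Delta)"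
proof (intro conjI allI impI)
  fix e r :: 'a assume "e * e = e"
  then show "e * r - r * e \<in> Delta" by (rule DT_ring_commutator_idempotent_in_Delta[OF assms])
next
  fix f d :: 'a assume "f \<in> Tr \<and> d \<in> Delta"
  then have f3: "f * (f * f) = f" and d: "d \<in> Delta" by (simp_all add: Tr_cube)
  define g where "g = f * f"
  have g: "g * g = g" and fg: "f * g = f" "g * f = f"
    unfolding g_def using f3 by (simp_all add: mult.assoc)
  define w where "w = 1 - g + f"
  have "w * w = 1" unfolding w_def using g fg by (simp add: algebra_simps g_def)
  from Delta_mult_unit_minus_one[OF units_of_ring_if_square_one[OF this] d]
  have wd: "(w - 1) * d \<in> Delta" "d * (w - 1) \<in> Delta" .
  have f_eq: "f = (w - 1) + g" unfolding w_def by simp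
  have "f * d + d * f = ((w - 1) * d + d * (w - 1)) + (g * d + d * g)"
    unfolding f_eq by (simp add: algebra_simps)
  then show "f * d + d * f \<in> Delta"
    using wd DT_ring_anticommutator_idempotent_in_Delta[OF assms g d] by (simp add: Delta_add)
  have "f * d - d * f = ((w - 1) * d - d * (w - 1)) + (g * d - d * g)"
    unfolding f_eq by (simp add: algebra_simps)
  then show "f * d - d * f \<in> Delta"
    using wd DT_ring_commutator_idempotent_in_Delta[OF assms g] by (simp add: Delta_add Delta_diff)
qed

end
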